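(* Let $S$ be a $\phi$-calibrated surrogate with potential $h:\mathcal{D}\to\mathbb{R}$, assume $\psi$ is injective, and suppose $h$ is $(1/\beta)$-strongly convex on $\mathcal{D}$ with respect to $\|\cdot\|_2$. Then for all $\varepsilon\ge0$, $$\zeta_h(\varepsilon)\ge\frac{\varepsilon^2}{2\beta\max_{z\neq z'}\|\psi(z)-\psi(z')\|_2^2}.$$
   Context: $\mathcal{Y},\mathcal{Z}$ finite sets ($|\mathcal{Z}|\ge2$), $\mathcal{H}$ a finite-dimensional real Euclidean space, $\psi:\mathcal{Z}\to\mathcal{H}$, $\phi:\mathcal{Y}\to\mathcal{H}$, $c\in\mathbb{R}$, $L(z,y)=\langle\psi(z),\phi(y)\rangle+c$. $\mu(q)=\sum_y q(y)\phi(y)$, $\mathcal{M}=\operatorname{hull}(\phi(\mathcal{Y}))$, $\ell(z,q)=\mathbb{E}_{Y\sim q}L(z,Y)$, $\delta\ell(z,q)=\ell(z,q)-\min_{z'}\ell(z',q)$. $z(u)$ is an element of $\arg\min_z\langle\psi(z),u\rangle$ (fixed tie-breaking). For $S:\mathcal{V}\times\mathcal{Y}\to\mathbb{R}$: $s(v,q)=\mathbb{E}_{Y\sim q}S(v,Y)$, $\delta s(v,q)=s(v,q)-\inf_{v'}s(v',q)$. $D_h(u',u)=h(u')-h(u)-\langle u'-u,\nabla h(u)\rangle$. $S$ is $\phi$-calibrated with potential $h$ if there exist convex $\mathcal{D}\supseteq\mathcal{M}$, strictly convex differentiable $h:\mathcal{D}\to\mathbb{R}$ and continuous bijection $t:\mathcal{D}\to\mathcal{V}$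 with $\delta s(v,q)=D_h(\mu(q),t^{-1}(v))$ for all $v,q$. Decoding $d(v)=z(t^{-1}(v))$; $\zeta_h(\varepsilon)=\inf\{\delta s(v,q):\delta\ell(d(v),q)\ge\varepsilon\}$. Strong convexity: $h(u)\ge h(v)+\langle u-v,\nabla h(v)\rangle+\frac1{2\beta}\|u-v\|_2^2$ for $u,v\in\mathcal{D}$. *)

theory Defs
  imports "HOL-Analysis.Analysis"
begin

definition prob_simplex :: "('y::finite \<Rightarrow> real) set" where
  "prob_simplex = {q. (\<forall>y. 0 \<le> q y) \<and> (\<Sum>y\<in>UNIV. q y) = 1}"

definition strictly_convex_on :: "'a::real_vector set \<Rightarrow> ('a \<Rightarrow> real) \<Rightarrow> bool" where
  "strictly_convex_on D f \<longleftrightarrow>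
     (\<forall>x\<in>D. \<forall>y\<in>D. \<forall>u::real. x \<noteq> y \<and> 0 < u \<and> u < 1 \<longrightarrow>
        f ((1 - u) *\<^sub>R x + u *\<^sub>R y) < (1 - u) * f x + u * f y)"

definition mu :: "('y::finite \<Rightarrow> 'h::real_vector) \<Rightarrow> ('y \<Rightarrow> real) \<Rightarrow> 'h" where
  "mu \<phi> q = (\<Sum>y\<in>UNIV. q y *\<^sub>R \<phi> y)"

definition ell :: "('z \<Rightarrow> 'h::real_inner) \<Rightarrow> ('y::finite \<Rightarrow> 'h) \<Rightarrow> real \<Rightarrow> 'z \<Rightarrow> ('y \<Rightarrow> real) \<Rightarrow> real" where
  "ell \<psi> \<phi> c z q = (\<Sum>y\<in>UNIV. q y * (inner (\<psi> z) (\<phi> y) + c))"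

definition delta_ell :: "('z::finite \<Rightarrow> 'h::real_inner) \<Rightarrow> ('y::finite \<Rightarrow> 'h) \<Rightarrow> real \<Rightarrow> 'z \<Rightarrow> ('y \<Rightarrow> real) \<Rightarrow> real" where
  "delta_ell \<psi> \<phi> c z q = ell \<psi> \<phi> c z q - Min ((\<lambda>z'. ell \<psi> \<phi> c z' q) ` UNIV)"

definition s_exp :: "('v \<Rightarrow> 'y::finite \<Rightarrow> real) \<Rightarrow> 'v \<Rightarrow> ('y \<Rightarrow> real) \<Rightarrow> real" where
  "s_exp S v q = (\<Sum>y\<in>UNIV. q y * S v y)"

definition delta_s :: "('v \<Rightarrow> 'y::finite \<Rightarrow> real) \<Rightarrow> 'v set \<Rightarrow> 'v \<Rightarrow> ('y \<Rightarrow> real) \<Rightarrow> real" where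
  "delta_s S V v q = s_exp S v q - Inf ((\<lambda>v'. s_exp S v' q) ` V)"

definition bregman :: "('h::real_inner \<Rightarrow> real) \<Rightarrow> ('h \<Rightarrow> 'h) \<Rightarrow> 'h \<Rightarrow> 'h \<Rightarrow> real" where
  "bregman h gh u' u = h u' - h u - inner (u' - u) (gh u)"

text \<open>Calibration function, with the convention \<open>inf \<emptyset> = \<infinity>\<close> (extended reals).\<close>
definition zeta :: "('v \<Rightarrow> 'y::finite \<Rightarrow> real) \<Rightarrow> 'v set \<Rightarrow> ('z::finite \<Rightarrow> 'h::real_inner)
    \<Rightarrow> ('y \<Rightarrow> 'h) \<Rightarrow> real \<Rightarrow> ('v \<Rightarrow> 'z) \<Rightarrow> real \<Rightarrow> ereal" where
  "zeta S V \<psi> \<phi> c d \<epsilon> =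
     Inf {ereal (delta_s S V v q) | v q. v \<in> V \<and> q \<in> prob_simplex \<and> delta_ell \<psi> \<phi> c (d v) q \<ge> \<epsilon>}"

end

theory Submission
  imports Defs
begin

text \<open>The decoded prediction \<open>z(u)\<close> minimises \<open>\<langle>\<psi> z, u\<rangle>\<close>, so the target regret at \<open>q\<close> is at most
  \<open>\<langle>\<psi> z(u) - \<psi> z*, \<mu>(q) - u\<rangle> \<le> \<parallel>\<psi> z(u) - \<psi> z*\<parallel> \<parallel>\<mu>(q) - u\<parallel>\<close>, where \<open>z*\<close> is optimal for \<open>q\<close>.
  Strong convexity bounds the Bregman divergence \<open>D\<^sub>h(\<mu>(q), u)\<close>, i.e. the surrogate regret,
  from below by \<open>\<parallel>\<mu>(q) - u\<parallel>\<^sup>2 / (2\<beta>)\<close>; combining the two bounds gives the quadratic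
  calibration function.\<close>

definition max_sq_separation :: "('z::finite \<Rightarrow> 'h::real_normed_vector) \<Rightarrow> real" where
  "max_sq_separation \<psi> = Max {(norm (\<psi> z - \<psi> z'))\<^sup>2 | z z'. z \<noteq> z'}"

lemma two_distinct_elements:
  assumes "CARD('z) \<ge> 2"
  obtains a b :: "'z::finite" where "a \<noteq> b"
proof -
  have "\<not> CARD('z) \<le> Suc 0"
    using assms by simp
  then show thesis
    using that by (auto simp: card_le_Suc0_iff_eq)
qed

lemma finite_sq_separations:
  "finite {(norm (\<psi> z - \<psi> z'))\<^sup>2 | z z'. z \<noteq> (z'::'z::finite)}"
proof -
  have "{(norm (\<psi> z - \<psi> z'))\<^sup>2 | z z'. z \<noteq> z'} \<subseteq> (\<lambda>(z, z'). (norm (\<psi> z - \<psi> z'))\<^sup>2) ` UNIV"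
    by auto
  then show ?thesis
    by (rule finite_subset) simp
qed

lemma sq_separation_le_max:
  fixes \<psi> :: "'z::finite \<Rightarrow> 'h::real_normed_vector"
  assumes "CARD('z) \<ge> 2"
  shows "(norm (\<psi> z - \<psi> z'))\<^sup>2 \<le> max_sq_separation \<psi>"
proof (cases "z = z'")
  case True
  obtain a b :: 'z where "a \<noteq> b"
    using assms by (rule two_distinct_elements)
  then have "(norm (\<psi> a - \<psi> b))\<^sup>2 \<le> max_sq_separation \<psi>"
    unfolding max_sq_separation_def by (intro Max_ge[OF finite_sq_separations]) blast
  then have "0 \<le> max_sq_separation \<psi>"
    by (rule order_trans[OF zero_le_power2])
  then show ?thesis
    using True by simp
next
  case False
  then show ?thesis
    unfolding max_sq_separation_def by (intro Max_ge[OF finite_sq_separations]) blast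
qed

lemma max_sq_separation_pos:
  fixes \<psi> :: "'z::finite \<Rightarrow> 'h::real_normed_vector"
  assumes "CARD('z) \<ge> 2" and "inj \<psi>"
  shows "max_sq_separation \<psi> > 0"
proof -
  obtain a b :: 'z where "a \<noteq> b"
    using assms(1) by (rule two_distinct_elements)
  then have "(norm (\<psi> a - \<psi> b))\<^sup>2 > 0"
    using \<open>inj \<psi>\<close> by (simp add: inj_eq)
  then show ?thesis
    using sq_separation_le_max[OF assms(1)] by (rule less_le_trans)
qed

lemma mu_in_convex_hull:
  assumes "q \<in> prob_simplex"
  shows "mu \<phi> q \<in> convex hull (range \<phi>)"
  unfolding mu_def
  using assms by (intro convex_sum) (auto simp: prob_simplex_def hull_inc)

lemma ell_eq_inner_mu:
  fixes \<psi> :: "'z \<Rightarrow> 'h::real_inner" and \<phi> :: "'y::finite \<Rightarrow> 'h"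
  assumes "q \<in> prob_simplex"
  shows "ell \<psi> \<phi> c z q = inner (\<psi> z) (mu \<phi> q) + c"
proof -
  have "ell \<psi> \<phi> c z q = (\<Sum>y\<in>UNIV. q y * inner (\<psi> z) (\<phi> y)) + (\<Sum>y\<in>UNIV. q y) * c"
    unfolding ell_def by (simp add: algebra_simps sum.distrib sum_distrib_left sum_distrib_right)
  also have "\<dots> = inner (\<psi> z) (mu \<phi> q) + c"
    using assms by (simp add: prob_simplex_def mu_def inner_sum_right)
  finally show ?thesis .
qed

lemma delta_ell_eq_inner_mu:
  fixes \<psi> :: "'z::finite \<Rightarrow> 'h::real_inner"
  assumes "q \<in> prob_simplex"
  obtains z' where "delta_ell \<psi> \<phi> c z q = inner (\<psi> z - \<psi> z') (mu \<phi> q)"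
proof -
  have "Min (range (\<lambda>z'. ell \<psi> \<phi> c z' q)) \<in> range (\<lambda>z'. ell \<psi> \<phi> c z' q)"
    by (intro Min_in) auto
  then obtain z' where "Min (range (\<lambda>z'. ell \<psi> \<phi> c z' q)) = ell \<psi> \<phi> c z' q"
    by blast
  then show ?thesis
    using that[of z'] assms by (simp add: delta_ell_def ell_eq_inner_mu inner_diff_left)
qed

lemma delta_ell_nonneg: "delta_ell \<psi> \<phi> c z q \<ge> 0"
  unfolding delta_ell_def by simp

lemma delta_ell_le_separation_mult_dist:
  fixes \<psi> :: "'z::finite \<Rightarrow> 'h::real_inner"
  assumes "q \<in> prob_simplex" and argmin: "\<forall>z'. inner (\<psi> z) u \<le> inner (\<psi> z') u"
  obtains z' where "delta_ell \<psi> \<phi> c z q \<le> norm (\<psi> z - \<psi> z') * norm (mu \<phi> q - u)"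
proof -
  obtain z' where eq: "delta_ell \<psi> \<phi> c z q = inner (\<psi> z - \<psi> z') (mu \<phi> q)"
    using delta_ell_eq_inner_mu[OF assms(1)] .
  have "inner (\<psi> z - \<psi> z') u \<le> 0"
    using argmin by (simp add: inner_diff_left)
  then have "delta_ell \<psi> \<phi> c z q \<le> inner (\<psi> z - \<psi> z') (mu \<phi> q - u)"
    by (simp add: eq inner_diff_right)
  also have "\<dots> \<le> norm (\<psi> z - \<psi> z') * norm (mu \<phi> q - u)"
    by (rule norm_cauchy_schwarz)
  finally show ?thesis
    by (rule that)
qed

lemma delta_ell_sq_le:
  fixes \<psi> :: "'z::finite \<Rightarrow> 'h::real_inner"
  assumes "CARD('z) \<ge> 2" and "q \<in> prob_simplex"
    and "\<forall>z'. inner (\<psi> z) u \<le> inner (\<psi> z') u"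
  shows "(delta_ell \<psi> \<phi> c z q)\<^sup>2 \<le> max_sq_separation \<psi> * (norm (mu \<phi> q - u))\<^sup>2"
proof -
  obtain z' where le: "delta_ell \<psi> \<phi> c z q \<le> norm (\<psi> z - \<psi> z') * norm (mu \<phi> q - u)"
    using delta_ell_le_separation_mult_dist[OF assms(2,3)] .
  have "(delta_ell \<psi> \<phi> c z q)\<^sup>2 \<le> (norm (\<psi> z - \<psi> z'))\<^sup>2 * (norm (mu \<phi> q - u))\<^sup>2"
    using power_mono[OF le delta_ell_nonneg, of 2] by (simp add: power_mult_distrib)
  also have "\<dots> \<le> max_sq_separation \<psi> * (norm (mu \<phi> q - u))\<^sup>2"
    using sq_separation_le_max[OF assms(1)] by (rule mult_right_mono) simp
  finally show ?thesis .
qed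

lemma bregman_ge_of_strongly_convex:
  assumes "\<forall>u\<in>D. \<forall>w\<in>D. h u \<ge> h w + inner (u - w) (gh w) + (1 / (2 * \<beta>)) * (norm (u - w))\<^sup>2"
    and "u \<in> D" and "w \<in> D" and "\<beta> > 0"
  shows "(norm (u - w))\<^sup>2 \<le> 2 * \<beta> * bregman h gh u w"
proof -
  have "(1 / (2 * \<beta>)) * (norm (u - w))\<^sup>2 \<le> bregman h gh u w"
    using assms(1-3) unfolding bregman_def by force
  then show ?thesis
    using \<open>\<beta> > 0\<close> by (simp add: field_simps)
qed

theorem theoremD4:
  fixes \<psi> :: "'z::finite \<Rightarrow> 'h::euclidean_space"
    and \<phi> :: "'y::finite \<Rightarrow> 'h"
    and c :: real
    and zsel :: "'h \<Rightarrow> 'z"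
    and S :: "'v::topological_space \<Rightarrow> 'y \<Rightarrow> real"
    and V :: "'v set"
    and D :: "'h set"
    and h :: "'h \<Rightarrow> real"
    and gh :: "'h \<Rightarrow> 'h"
    and t :: "'h \<Rightarrow> 'v"
    and \<beta> :: real
    and \<epsilon> :: real
  assumes card_Z: "CARD('z) \<ge> 2"
    and zsel_argmin: "\<forall>u z'. inner (\<psi> (zsel u)) u \<le> inner (\<psi> z') u"
    and D_convex: "convex D"
    and M_sub_D: "convex hull (range \<phi>) \<subseteq> D"
    and h_strict: "strictly_convex_on D h"
    and h_grad: "\<forall>u\<in>D. (h has_derivative (\<lambda>x. inner (gh u) x)) (at u within D)"
    and t_cont: "continuous_on D t"
    and t_bij: "bij_betw t D V"
    and calibrated: "\<forall>v\<in>V. \<forall>q\<in>prob_simplex. delta_s S V v q = bregman h gh (mu \<phi> q) (inv_into D t v)"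
    and psi_inj: "inj \<psi>"
    and beta_pos: "\<beta> > 0"
    and strongly_convex: "\<forall>u\<in>D. \<forall>w\<in>D. h u \<ge> h w + inner (u - w) (gh w) + (1 / (2 * \<beta>)) * (norm (u - w))\<^sup>2"
    and eps_nonneg: "\<epsilon> \<ge> 0"
  shows "zeta S V \<psi> \<phi> c (\<lambda>v. zsel (inv_into D t v)) \<epsilon>
           \<ge> ereal (\<epsilon>\<^sup>2 / (2 * \<beta> * Max {(norm (\<psi> z - \<psi> z'))\<^sup>2 | z z'. z \<noteq> z'}))"
  unfolding zeta_def max_sq_separation_def[symmetric]
proof (rule Inf_greatest, clarify)
  fix v q
  assume v: "v \<in> V" and q: "q \<in> prob_simplex"
    and regret: "\<epsilon> \<le> delta_ell \<psi> \<phi> c (zsel (inv_into D t v)) q"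
  define u where "u = inv_into D t v"
  have "u \<in> D"
    unfolding u_def using t_bij v by (metis bij_betw_def inv_into_into)
  moreover have "mu \<phi> q \<in> D"
    using mu_in_convex_hull[OF q] M_sub_D by blast
  ultimately have dist: "(norm (mu \<phi> q - u))\<^sup>2 \<le> 2 * \<beta> * delta_s S V v q"
    using bregman_ge_of_strongly_convex[OF strongly_convex _ _ beta_pos] calibrated v q u_def
    by simp
  have argmin: "\<forall>z'. inner (\<psi> (zsel u)) u \<le> inner (\<psi> z') u"
    using zsel_argmin by blast
  have sep_pos: "max_sq_separation \<psi> > 0"
    using max_sq_separation_pos[OF card_Z psi_inj] .
  have "\<epsilon>\<^sup>2 \<le> (delta_ell \<psi> \<phi> c (zsel u) q)\<^sup>2"
    using power_mono[OF regret eps_nonneg] unfolding u_def .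
  also have "\<dots> \<le> max_sq_separation \<psi> * (norm (mu \<phi> q - u))\<^sup>2"
    by (rule delta_ell_sq_le[OF card_Z q argmin])
  also have "\<dots> \<le> max_sq_separation \<psi> * (2 * \<beta> * delta_s S V v q)"
    using dist sep_pos by (intro mult_left_mono) auto
  finally have "\<epsilon>\<^sup>2 / (2 * \<beta> * max_sq_separation \<psi>) \<le> delta_s S V v q"
    using beta_pos sep_pos by (simp add: pos_divide_le_eq algebra_simps)
  then show "ereal (\<epsilon>\<^sup>2 / (2 * \<beta> * max_sq_separation \<psi>)) \<le> ereal (delta_s S V v q)"
    by simp
qed

end
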